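(* Let $\mathbf{x}:[-1,1]^2\to\mathbb{R}^2$, $\mathbf{x}(\xi,\eta)=(x(\xi,\eta),y(\xi,\eta))$, be a $C^1$ map whose Jacobian matrix $\mathbf{J}(\xi,\eta)=\begin{bmatrix} x_\xi & x_\eta\\ y_\xi & y_\eta\end{bmatrix}$ is nonsingular on the edge $\{\xi=1\}$ (including the corners $(1,\pm1)$). Let $F(-1,\cdot)$, $F(\cdot,-1)$, $F(\cdot,1)$ be given differentiable functions on $[-1,1]$ (the transformed Dirichlet data on the edges $\xi=-1$, $\eta=-1$, $\eta=1$), with $F(-1,-1)$ and $F(-1,1)$ taking the same value whether read from $F(-1,\cdot)$ or from $F(\cdot,\mp1)$, and let $u_{nBC}$ be a given function on the image of the edge $\xi=1$ (Neumann data). Define $S_{BC},T_{BC},\lambda_B,\lambda_C,F^a_\eta(1,\pm1)$, the polynomials $\varphi_0,\varphi_1,\psi_0,\psi_1$, and the operators $Pg$, $F^g_\xi(1,\eta)$, $PF^g$ as in the context. Assume the compatibility conditions: if $\lambda_B=0$ then $F_\xi(1,-1)=T_{BC}(-1)$, and if $\lambda_C=0$ then $F_\xi(1,1)=T_{BC}(1)$. Then for every sufficiently differentiable $g:[-1,1]^2\to\mathbb{R}$, the function $$V(\xi,\eta)=g(\xi,\eta)-Pg(\xi,\eta)+PF^g(\xi,\eta)$$ satisfies, for all $\xi,\eta\in[-1,1]$, $V(-1,\eta)=F(-1,\eta)$, $V(\xi,-1)=F(\xi,-1)$, $V(\xi,1)=F(\xi,1)$, and $$V_\xi(1,\eta)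+S_{BC}(\eta)V_\eta(1,\eta)=T_{BC}(\eta).$$
   Context: Setting: a curved quadrilateral $ABCD$ is the image of $[-1,1]^2$ under $\mathbf{x}$, with $A=\mathbf{x}(-1,-1)$, $B=\mathbf{x}(1,-1)$, $C=\mathbf{x}(1,1)$, $D=\mathbf{x}(-1,1)$; edge $AB$ is $\eta=-1$, $BC$ is $\xi=1$, $CD$ is $\eta=1$, $AD$ is $\xi=-1$. A field $u$ on the quadrilateral is represented as $V(\xi,\eta)=u(\mathbf{x}(\xi,\eta))$; Dirichlet data on $AB,CD,AD$ become $F(\xi,-1),F(\xi,1),F(-1,\eta)$, and the Neumann condition $\mathbf n\cdot\nabla u=u_{nBC}$ on $BC$ becomes $V_\xi(1,\eta)+S_{BC}(\eta)V_\eta(1,\eta)=T_{BC}(\eta)$. Notation: $F(1,-1):=F(\xi,-1)|_{\xi=1}$, $F(1,1):=F(\xi,1)|_{\xi=1}$, $F_\xi(1,-1):=\frac{d}{d\xi}F(\xi,-1)|_{\xi=1}$, $F_\xi(1,1):=\frac{d}{d\xi}F(\xi,1)|_{\xi=1}$. Definitions: $K_{xBC}(\eta)=\frac{\|\mathbf{x}_\eta(1,\eta)\|}{\det\mathbf{J}(1,\eta)}$, $K_{yBC}(\eta)=-\frac{\mathbf{x}_\xi(1,\eta)\cdot\mathbf{x}_\eta(1,\eta)}{\|\mathbf{x}_\eta(1,\eta)\|\det\mathbf{J}(1,\eta)}$, $S_{BC}(\eta)=K_{yBC}(\eta)/K_{xBC}(\eta)$, $T_{BC}(\eta)=u_{nBC}(\mathbf{x}(1,\eta))/K_{xBC}(\eta)$.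 Flags: $\lambda_B=0$ if $\mathbf{x}_\xi(1,-1)\cdot\mathbf{x}_\eta(1,-1)=0$ (edges $AB$ and $BC$ orthogonal at $B$) and $\lambda_B=1$ otherwise; $\lambda_C=0$ if $\mathbf{x}_\xi(1,1)\cdot\mathbf{x}_\eta(1,1)=0$ and $\lambda_C=1$ otherwise. When $\lambda_B=1$, $F^a_\eta(1,-1)=\frac{T_{BC}(-1)-F_\xi(1,-1)}{S_{BC}(-1)}$; when $\lambda_C=1$, $F^a_\eta(1,1)=\frac{T_{BC}(1)-F_\xi(1,1)}{S_{BC}(1)}$; any term multiplied by a flag equal to $0$ is taken to be $0$. Polynomials on $[-1,1]$: $\phi_0(t)=\tfrac12(1-t)$, $\phi_1(t)=\tfrac12(1+t)$; $\varphi_0=\phi_0^2(1+2\phi_1)$, $\varphi_1=\phi_1^2(1+2\phi_0)$, $\psi_0=2\phi_0^2\phi_1$, $\psi_1=-2\phi_0\phi_1^2$. $Pg(\xi,\eta)=g(-1,\eta)\varphi_0(\xi)+g_\xi(1,\eta)\psi_1(\xi)+g(\xi,-1)\varphi_0(\eta)+g(\xi,1)\varphi_1(\eta)-[g(-1,-1)\varphi_0(\eta)+g(-1,1)\varphi_1(\eta)]\varphi_0(\xi)-[g_\xi(1,-1)\varphi_0(\eta)+g_\xi(1,1)\varphi_1(\eta)]\psi_1(\xi)+[\lambda_Bg_\eta(1,-1)\psi_0(\eta)+\lambda_Cg_\eta(1,1)\psi_1(\eta)]\varphi_1(\xi)$. $F^g_\xi(1,\eta)=T_{BC}(\eta)-S_{BC}(\eta)\{g_\eta(1,\eta)-[g(1,-1)-F(1,-1)]\varphi_0'(\eta)-[g(1,1)-F(1,1)]\varphi_1'(\eta)-\lambda_B[g_\eta(1,-1)-F^a_\eta(1,-1)]\psi_0'(\eta)-\lambda_C[g_\eta(1,1)-F^a_\eta(1,1)]\psi_1'(\eta)\}$.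 $PF^g(\xi,\eta)=F(-1,\eta)\varphi_0(\xi)+F^g_\xi(1,\eta)\psi_1(\xi)+F(\xi,-1)\varphi_0(\eta)+F(\xi,1)\varphi_1(\eta)-[F(-1,-1)\varphi_0(\eta)+F(-1,1)\varphi_1(\eta)]\varphi_0(\xi)-[F_\xi(1,-1)\varphi_0(\eta)+F_\xi(1,1)\varphi_1(\eta)]\psi_1(\xi)+[\lambda_BF^a_\eta(1,-1)\psi_0(\eta)+\lambda_CF^a_\eta(1,1)\psi_1(\eta)]\varphi_1(\xi)$. *)

theory Defs
  imports "HOL-Analysis.Analysis"
begin

definition sq :: "(real \<times> real) set" where
  "sq = {-1..1} \<times> {-1..1}"

definition phi0 :: "real \<Rightarrow> real" where "phi0 t = (1 - t) / 2"
definition phi1 :: "real \<Rightarrow> real" where "phi1 t = (1 + t) / 2"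
definition vphi0 :: "real \<Rightarrow> real" where "vphi0 t = (phi0 t)^2 * (1 + 2 * phi1 t)"
definition vphi1 :: "real \<Rightarrow> real" where "vphi1 t = (phi1 t)^2 * (1 + 2 * phi0 t)"
definition psi0 :: "real \<Rightarrow> real" where "psi0 t = 2 * (phi0 t)^2 * phi1 t"
definition psi1 :: "real \<Rightarrow> real" where "psi1 t = - 2 * phi0 t * (phi1 t)^2"

text \<open>Partial derivatives from a (Frechet) derivative Dg: Dg p is the derivative at p.\<close>
definition pxi :: "('a \<Rightarrow> real \<times> real \<Rightarrow> 'b) \<Rightarrow> 'a \<Rightarrow> 'b" where
  "pxi D p = D p (1, 0)"
definition peta :: "('a \<Rightarrow> real \<times> real \<Rightarrow> 'b) \<Rightarrow> 'a \<Rightarrow> 'b" where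
  "peta D p = D p (0, 1)"

definition jdet :: "(real \<times> real \<Rightarrow> real \<times> real \<Rightarrow> real \<times> real) \<Rightarrow> real \<times> real \<Rightarrow> real" where
  "jdet Dx p = fst (pxi Dx p) * snd (peta Dx p) - fst (peta Dx p) * snd (pxi Dx p)"

definition KxBC :: "(real \<times> real \<Rightarrow> real \<times> real \<Rightarrow> real \<times> real) \<Rightarrow> real \<Rightarrow> real" where
  "KxBC Dx \<eta> = norm (peta Dx (1, \<eta>)) / jdet Dx (1, \<eta>)"

definition KyBC :: "(real \<times> real \<Rightarrow> real \<times> real \<Rightarrow> real \<times> real) \<Rightarrow> real \<Rightarrow> real" where
  "KyBC Dx \<eta> = - (inner (pxi Dx (1, \<eta>)) (peta Dx (1, \<eta>)))
                  / (norm (peta Dx (1, \<eta>)) * jdet Dx (1, \<eta>))"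

definition SBC :: "(real \<times> real \<Rightarrow> real \<times> real \<Rightarrow> real \<times> real) \<Rightarrow> real \<Rightarrow> real" where
  "SBC Dx \<eta> = KyBC Dx \<eta> / KxBC Dx \<eta>"

definition TBC :: "(real \<times> real \<Rightarrow> real \<times> real) \<Rightarrow> (real \<times> real \<Rightarrow> real \<times> real \<Rightarrow> real \<times> real)
                   \<Rightarrow> (real \<times> real \<Rightarrow> real) \<Rightarrow> real \<Rightarrow> real" where
  "TBC x Dx unBC \<eta> = unBC (x (1, \<eta>)) / KxBC Dx \<eta>"

text \<open>Flags: 0 if the edges are orthogonal at the corner, 1 otherwise.\<close>
definition lamB :: "(real \<times> real \<Rightarrow> real \<times> real \<Rightarrow> real \<times> real) \<Rightarrow> real" where
  "lamB Dx = (if inner (pxi Dx (1, -1)) (peta Dx (1, -1)) = 0 then 0 else 1)"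
definition lamC :: "(real \<times> real \<Rightarrow> real \<times> real \<Rightarrow> real \<times> real) \<Rightarrow> real" where
  "lamC Dx = (if inner (pxi Dx (1, 1)) (peta Dx (1, 1)) = 0 then 0 else 1)"

text \<open>F^a_eta(1,-1) and F^a_eta(1,1); dFb1 = F_xi(1,-1), dFt1 = F_xi(1,1).
  (Only used multiplied by the corresponding flag.)\<close>
definition FaB :: "(real \<times> real \<Rightarrow> real \<times> real) \<Rightarrow> (real \<times> real \<Rightarrow> real \<times> real \<Rightarrow> real \<times> real)
                   \<Rightarrow> (real \<times> real \<Rightarrow> real) \<Rightarrow> real \<Rightarrow> real" where
  "FaB x Dx unBC dFb1 = (TBC x Dx unBC (-1) - dFb1) / SBC Dx (-1)"
definition FaC :: "(real \<times> real \<Rightarrow> real \<times> real) \<Rightarrow> (real \<times> real \<Rightarrow> real \<times> real \<Rightarrow> real \<times> real)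
                   \<Rightarrow> (real \<times> real \<Rightarrow> real) \<Rightarrow> real \<Rightarrow> real" where
  "FaC x Dx unBC dFt1 = (TBC x Dx unBC 1 - dFt1) / SBC Dx 1"

definition Pg :: "(real \<times> real \<Rightarrow> real) \<Rightarrow> (real \<times> real \<Rightarrow> real \<times> real \<Rightarrow> real)
                  \<Rightarrow> real \<Rightarrow> real \<Rightarrow> real \<Rightarrow> real \<Rightarrow> real" where
  "Pg g Dg lB lC \<xi> \<eta> =
     g (-1, \<eta>) * vphi0 \<xi> + pxi Dg (1, \<eta>) * psi1 \<xi>
     + g (\<xi>, -1) * vphi0 \<eta> + g (\<xi>, 1) * vphi1 \<eta>
     - (g (-1, -1) * vphi0 \<eta> + g (-1, 1) * vphi1 \<eta>) * vphi0 \<xi>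
     - (pxi Dg (1, -1) * vphi0 \<eta> + pxi Dg (1, 1) * vphi1 \<eta>) * psi1 \<xi>
     + (lB * peta Dg (1, -1) * psi0 \<eta> + lC * peta Dg (1, 1) * psi1 \<eta>) * vphi1 \<xi>"

text \<open>F^g_xi(1,eta). Fb = F(.,-1), Ft = F(.,1), FaBv = F^a_eta(1,-1), FaCv = F^a_eta(1,1).\<close>
definition Fgxi :: "(real \<Rightarrow> real) \<Rightarrow> (real \<Rightarrow> real) \<Rightarrow> (real \<times> real \<Rightarrow> real) \<Rightarrow> (real \<times> real \<Rightarrow> real \<times> real \<Rightarrow> real)
                    \<Rightarrow> (real \<Rightarrow> real) \<Rightarrow> (real \<Rightarrow> real) \<Rightarrow> real \<Rightarrow> real \<Rightarrow> real \<Rightarrow> real \<Rightarrow> real \<Rightarrow> real" where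
  "Fgxi T S g Dg Fb Ft lB lC FaBv FaCv \<eta> =
     T \<eta> - S \<eta> * (peta Dg (1, \<eta>)
        - (g (1, -1) - Fb 1) * deriv vphi0 \<eta>
        - (g (1, 1) - Ft 1) * deriv vphi1 \<eta>
        - lB * (peta Dg (1, -1) - FaBv) * deriv psi0 \<eta>
        - lC * (peta Dg (1, 1) - FaCv) * deriv psi1 \<eta>)"

text \<open>PF^g. Fl = F(-1,.), dFb1 = F_xi(1,-1), dFt1 = F_xi(1,1), Fg = F^g_xi(1,.).\<close>
definition PFg :: "(real \<Rightarrow> real) \<Rightarrow> (real \<Rightarrow> real) \<Rightarrow> (real \<Rightarrow> real) \<Rightarrow> real \<Rightarrow> real
                   \<Rightarrow> (real \<Rightarrow> real) \<Rightarrow> real \<Rightarrow> real \<Rightarrow> real \<Rightarrow> real \<Rightarrow> real \<Rightarrow> real \<Rightarrow> real" where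
  "PFg Fl Fb Ft dFb1 dFt1 Fg lB lC FaBv FaCv \<xi> \<eta> =
     Fl \<eta> * vphi0 \<xi> + Fg \<eta> * psi1 \<xi>
     + Fb \<xi> * vphi0 \<eta> + Ft \<xi> * vphi1 \<eta>
     - (Fl (-1) * vphi0 \<eta> + Fl 1 * vphi1 \<eta>) * vphi0 \<xi>
     - (dFb1 * vphi0 \<eta> + dFt1 * vphi1 \<eta>) * psi1 \<xi>
     + (lB * FaBv * psi0 \<eta> + lC * FaCv * psi1 \<eta>) * vphi1 \<xi>"

definition Vfun :: "(real \<times> real \<Rightarrow> real \<times> real) \<Rightarrow> (real \<times> real \<Rightarrow> real \<times> real \<Rightarrow> real \<times> real)
                    \<Rightarrow> (real \<times> real \<Rightarrow> real) \<Rightarrow> (real \<Rightarrow> real) \<Rightarrow> (real \<Rightarrow> real) \<Rightarrow> (real \<Rightarrow> real)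
                    \<Rightarrow> real \<Rightarrow> real \<Rightarrow> (real \<times> real \<Rightarrow> real) \<Rightarrow> (real \<times> real \<Rightarrow> real \<times> real \<Rightarrow> real)
                    \<Rightarrow> real \<Rightarrow> real \<Rightarrow> real" where
  "Vfun x Dx unBC Fl Fb Ft dFb1 dFt1 g Dg \<xi> \<eta> =
     (let lB = lamB Dx; lC = lamC Dx;
          FaBv = FaB x Dx unBC dFb1; FaCv = FaC x Dx unBC dFt1;
          Fg = Fgxi (TBC x Dx unBC) (SBC Dx) g Dg Fb Ft lB lC FaBv FaCv
      in g (\<xi>, \<eta>) - Pg g Dg lB lC \<xi> \<eta>
         + PFg Fl Fb Ft dFb1 dFt1 Fg lB lC FaBv FaCv \<xi> \<eta>)"

end

theory Submission
  imports Defs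
begin

text \<open>V agrees with g except through the corrections Pg and PF^g, which are built from the
  cubic Hermite basis: \<open>vphi0\<close>, \<open>vphi1\<close> interpolate values and \<open>psi0\<close>, \<open>psi1\<close> interpolate slopes at
  the endpoints. Hence on each Dirichlet edge Pg reproduces the trace of g and PF^g the given
  data, so V takes the data there. On the edge \<open>\<xi> = 1\<close> the \<open>\<xi>\<close>-derivative of V is F^g_xi, while
  V(1,.) differs from g(1,.) by a Hermite interpolant of the corner mismatches; its
  \<open>\<eta>\<close>-derivative is exactly the bracket in F^g_xi, so the Neumann condition holds by construction.
  The Dirichlet conditions on the horizontal edges additionally need F^g_xi(1,\<plusminus>1) = F_xi(1,\<plusminus>1):
  either the edges meet orthogonally, then S_BC vanishes at the corner and the compatibility
  condition is used, or S_BC is nonzero and F^a_eta is chosen to enforce it.\<close>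

lemma vphi0_has_real_derivative:
  "D = -3 * (1 - t\<^sup>2) / 4 \<Longrightarrow> (vphi0 has_real_derivative D) (at t within S)"
  unfolding vphi0_def phi0_def phi1_def
  by (auto intro!: derivative_eq_intros simp: field_simps power2_eq_square)

lemma vphi1_has_real_derivative:
  "D = 3 * (1 - t\<^sup>2) / 4 \<Longrightarrow> (vphi1 has_real_derivative D) (at t within S)"
  unfolding vphi1_def phi0_def phi1_def
  by (auto intro!: derivative_eq_intros simp: field_simps power2_eq_square)

lemma psi0_has_real_derivative:
  "D = (1 - t) * (-1 - 3 * t) / 4 \<Longrightarrow> (psi0 has_real_derivative D) (at t within S)"
  unfolding psi0_def phi0_def phi1_def
  by (auto intro!: derivative_eq_intros simp: field_simps power2_eq_square)

lemma psi1_has_real_derivative: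
  "D = -(1 + t) * (1 - 3 * t) / 4 \<Longrightarrow> (psi1 has_real_derivative D) (at t within S)"
  unfolding psi1_def phi0_def phi1_def
  by (auto intro!: derivative_eq_intros simp: field_simps power2_eq_square)

lemmas hermite_basis_has_real_derivative =
  vphi0_has_real_derivative vphi1_has_real_derivative
  psi0_has_real_derivative psi1_has_real_derivative

lemma deriv_hermite_basis:
  "deriv vphi0 t = -3 * (1 - t\<^sup>2) / 4" "deriv vphi1 t = 3 * (1 - t\<^sup>2) / 4"
  "deriv psi0 t = (1 - t) * (-1 - 3 * t) / 4" "deriv psi1 t = -(1 + t) * (1 - 3 * t) / 4"
  by (rule DERIV_imp_deriv, rule hermite_basis_has_real_derivative, rule refl)+

lemmas hermite_basis_has_real_derivative_deriv =
  vphi0_has_real_derivative[OF deriv_hermite_basis(1)]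
  vphi1_has_real_derivative[OF deriv_hermite_basis(2)]
  psi0_has_real_derivative[OF deriv_hermite_basis(3)]
  psi1_has_real_derivative[OF deriv_hermite_basis(4)]

lemma hermite_basis_endpoints [simp]:
  "vphi0 (-1) = 1" "vphi0 1 = 0" "vphi1 (-1) = 0" "vphi1 1 = 1"
  "psi0 (-1) = 0" "psi0 1 = 0" "psi1 (-1) = 0" "psi1 1 = 0"
  by (simp_all add: vphi0_def vphi1_def psi0_def psi1_def phi0_def phi1_def)

lemma has_real_derivative_first_partial:
  assumes "(g has_derivative Dg (a, b)) (at (a, b) within S \<times> T)" and "b \<in> T"
  shows "((\<lambda>s. g (s, b)) has_real_derivative pxi Dg (a, b)) (at a within S)"
proof -
  have "((\<lambda>s. g (s, b)) has_derivative (\<lambda>s. Dg (a, b) (s, 0))) (at a within S)"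
  proof (rule has_derivative_in_compose[where f = "\<lambda>s. (s, b)"])
    show "((\<lambda>s. (s, b)) has_derivative (\<lambda>s. (s, 0))) (at a within S)"
      by (auto intro!: derivative_eq_intros)
    show "(g has_derivative Dg (a, b)) (at (a, b) within (\<lambda>s. (s, b)) ` S)"
      using assms(2) by (auto intro: has_derivative_subset[OF assms(1)])
  qed
  moreover have "Dg (a, b) (s, 0) = pxi Dg (a, b) * s" for s
    using linear_scale[OF has_derivative_linear[OF assms(1)], of s "(1, 0)"]
    by (simp add: pxi_def)
  ultimately show ?thesis
    by (simp add: has_field_derivative_def)
qed

lemma has_real_derivative_second_partial:
  assumes "(g has_derivative Dg (a, b)) (at (a, b) within S \<times> T)" and "a \<in> S"
  shows "((\<lambda>t. g (a, t)) has_real_derivative peta Dg (a, b)) (at b within T)"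
proof -
  have "((\<lambda>t. g (a, t)) has_derivative (\<lambda>t. Dg (a, b) (0, t))) (at b within T)"
  proof (rule has_derivative_in_compose[where f = "\<lambda>t. (a, t)"])
    show "((\<lambda>t. (a, t)) has_derivative (\<lambda>t. (0, t))) (at b within T)"
      by (auto intro!: derivative_eq_intros)
    show "(g has_derivative Dg (a, b)) (at (a, b) within (\<lambda>t. (a, t)) ` T)"
      using assms(2) by (auto intro: has_derivative_subset[OF assms(1)])
  qed
  moreover have "Dg (a, b) (0, t) = peta Dg (a, b) * t" for t
    using linear_scale[OF has_derivative_linear[OF assms(1)], of t "(0, 1)"]
    by (simp add: peta_def)
  ultimately show ?thesis
    by (simp add: has_field_derivative_def)
qed

lemma Pg_left_edge: "Pg g Dg lB lC (-1) \<eta> = g (-1, \<eta>)"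
  by (simp add: Pg_def)

lemma Pg_bottom_edge: "Pg g Dg lB lC \<xi> (-1) = g (\<xi>, -1)"
  by (simp add: Pg_def)

lemma Pg_top_edge: "Pg g Dg lB lC \<xi> 1 = g (\<xi>, 1)"
  by (simp add: Pg_def)

lemma Pg_right_edge:
  "Pg g Dg lB lC 1 \<eta> = g (1, -1) * vphi0 \<eta> + g (1, 1) * vphi1 \<eta>
     + lB * peta Dg (1, -1) * psi0 \<eta> + lC * peta Dg (1, 1) * psi1 \<eta>"
  by (simp add: Pg_def add.assoc)

lemma PFg_left_edge:
  assumes "Fl (-1) = Fb (-1)" and "Fl 1 = Ft (-1)"
  shows "PFg Fl Fb Ft dFb1 dFt1 Fg lB lC a c (-1) \<eta> = Fl \<eta>"
  using assms by (simp add: PFg_def)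

lemma PFg_bottom_edge:
  assumes "Fg (-1) = dFb1"
  shows "PFg Fl Fb Ft dFb1 dFt1 Fg lB lC a c \<xi> (-1) = Fb \<xi>"
  using assms by (simp add: PFg_def)

lemma PFg_top_edge:
  assumes "Fg 1 = dFt1"
  shows "PFg Fl Fb Ft dFb1 dFt1 Fg lB lC a c \<xi> 1 = Ft \<xi>"
  using assms by (simp add: PFg_def)

lemma PFg_right_edge:
  "PFg Fl Fb Ft dFb1 dFt1 Fg lB lC a c 1 \<eta> = Fb 1 * vphi0 \<eta> + Ft 1 * vphi1 \<eta>
     + lB * a * psi0 \<eta> + lC * c * psi1 \<eta>"
  by (simp add: PFg_def add.assoc)

lemma Pg_has_real_derivative_right_edge:
  assumes "\<And>p. p \<in> sq \<Longrightarrow> (g has_derivative Dg p) (at p within sq)" and "\<eta> \<in> {-1..1}"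
  shows "((\<lambda>\<xi>. Pg g Dg lB lC \<xi> \<eta>) has_real_derivative pxi Dg (1, \<eta>)) (at 1 within {-1..1})"
proof -
  have g_xi: "((\<lambda>\<xi>. g (\<xi>, t)) has_real_derivative D) (at 1 within {-1..1})"
    if "t \<in> {-1..1}" and "D = pxi Dg (1, t)" for t D
    using has_real_derivative_first_partial[of g Dg 1 t "{-1..1}" "{-1..1}"] assms(1) that
    by (simp add: sq_def)
  show ?thesis
    unfolding Pg_def
    using assms(2)
    by (auto intro!: derivative_eq_intros g_xi hermite_basis_has_real_derivative
        simp: algebra_simps)
qed

lemma PFg_has_real_derivative_right_edge:
  assumes "(Fb has_real_derivative dFb1) (at 1 within {-1..1})"
    and "(Ft has_real_derivative dFt1) (at 1 within {-1..1})"
  shows "((\<lambda>\<xi>. PFg Fl Fb Ft dFb1 dFt1 Fg lB lC a c \<xi> \<eta>) has_real_derivative Fg \<eta>)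
           (at 1 within {-1..1})"
  unfolding PFg_def
  using assms
  by (auto intro!: derivative_eq_intros hermite_basis_has_real_derivative simp: algebra_simps)

lemma has_real_derivative_xi_right_edge:
  assumes g: "\<And>p. p \<in> sq \<Longrightarrow> (g has_derivative Dg p) (at p within sq)"
    and "(Fb has_real_derivative dFb1) (at 1 within {-1..1})"
    and "(Ft has_real_derivative dFt1) (at 1 within {-1..1})"
    and \<eta>: "\<eta> \<in> {-1..1}"
  shows "((\<lambda>\<xi>. g (\<xi>, \<eta>) - Pg g Dg lB lC \<xi> \<eta> + PFg Fl Fb Ft dFb1 dFt1 Fg lB lC a c \<xi> \<eta>)
           has_real_derivative Fg \<eta>) (at 1 within {-1..1})"
proof -
  have "((\<lambda>\<xi>. g (\<xi>, \<eta>)) has_real_derivative pxi Dg (1, \<eta>)) (at 1 within {-1..1})"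
    using has_real_derivative_first_partial[of g Dg 1 \<eta> "{-1..1}" "{-1..1}"] g \<eta>
    by (simp add: sq_def)
  then show ?thesis
    using Pg_has_real_derivative_right_edge[OF g \<eta>]
      PFg_has_real_derivative_right_edge[OF assms(2,3)]
    by (auto intro!: derivative_eq_intros)
qed

lemma has_real_derivative_eta_right_edge:
  assumes g: "\<And>p. p \<in> sq \<Longrightarrow> (g has_derivative Dg p) (at p within sq)"
    and \<eta>: "\<eta> \<in> {-1..1}"
  shows "((\<lambda>t. g (1, t) - Pg g Dg lB lC 1 t + PFg Fl Fb Ft dFb1 dFt1 Fg lB lC a c 1 t)
           has_real_derivative
             peta Dg (1, \<eta>) - (g (1, -1) - Fb 1) * deriv vphi0 \<eta>
             - (g (1, 1) - Ft 1) * deriv vphi1 \<eta>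
             - lB * (peta Dg (1, -1) - a) * deriv psi0 \<eta>
             - lC * (peta Dg (1, 1) - c) * deriv psi1 \<eta>) (at \<eta> within {-1..1})"
proof -
  have "((\<lambda>t. g (1, t)) has_real_derivative peta Dg (1, \<eta>)) (at \<eta> within {-1..1})"
    using has_real_derivative_second_partial[of g Dg 1 \<eta> "{-1..1}" "{-1..1}"] g \<eta>
    by (simp add: sq_def)
  then show ?thesis
    unfolding Pg_right_edge PFg_right_edge
    by (auto intro!: derivative_eq_intros hermite_basis_has_real_derivative_deriv simp: algebra_simps)
qed

lemma SBC_eq_0_iff:
  assumes "jdet Dx (1, \<eta>) \<noteq> 0"
  shows "SBC Dx \<eta> = 0 \<longleftrightarrow> inner (pxi Dx (1, \<eta>)) (peta Dx (1, \<eta>)) = 0"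
proof -
  have "peta Dx (1, \<eta>) \<noteq> 0"
    using assms by (auto simp: jdet_def)
  then show ?thesis
    using assms by (simp add: SBC_def KyBC_def KxBC_def)
qed

lemma Fgxi_bottom_corner:
  "Fgxi T S g Dg Fb Ft lB lC a c (-1) = T (-1) - S (-1) * ((1 - lB) * peta Dg (1, -1) + lB * a)"
  by (simp add: Fgxi_def deriv_hermite_basis algebra_simps)

lemma Fgxi_top_corner:
  "Fgxi T S g Dg Fb Ft lB lC a c 1 = T 1 - S 1 * ((1 - lC) * peta Dg (1, 1) + lC * c)"
  by (simp add: Fgxi_def deriv_hermite_basis algebra_simps)

lemma corner_flux_eq:
  assumes "jdet Dx (1, \<eta>) \<noteq> 0"
    and lam: "lam = (if inner (pxi Dx (1, \<eta>)) (peta Dx (1, \<eta>)) = 0 then 0 else 1)"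
    and compat: "lam = 0 \<Longrightarrow> d = TBC x Dx unBC \<eta>"
  shows "TBC x Dx unBC \<eta>
           - SBC Dx \<eta> * ((1 - lam) * p + lam * ((TBC x Dx unBC \<eta> - d) / SBC Dx \<eta>)) = d"
  using SBC_eq_0_iff[OF assms(1)] lam compat by (cases "lam = 0") auto

theorem mainTheorem1:
  fixes x :: "real \<times> real \<Rightarrow> real \<times> real"
    and Dx :: "real \<times> real \<Rightarrow> real \<times> real \<Rightarrow> real \<times> real"
    and unBC :: "real \<times> real \<Rightarrow> real"
    and Fl Fb Ft dFl dFb dFt :: "real \<Rightarrow> real"
    and g :: "real \<times> real \<Rightarrow> real"
    and Dg :: "real \<times> real \<Rightarrow> real \<times> real \<Rightarrow> real"
  assumes x_deriv: "\<And>p. p \<in> sq \<Longrightarrow> (x has_derivative Dx p) (at p within sq)"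
    and x_C1: "continuous_on sq (\<lambda>p. Dx p (1, 0))"
    and x_C1': "continuous_on sq (\<lambda>p. Dx p (0, 1))"
    and J_nonsing: "\<And>\<eta>. \<eta> \<in> {-1..1} \<Longrightarrow> jdet Dx (1, \<eta>) \<noteq> 0"
    and Fl_deriv: "\<And>t. t \<in> {-1..1} \<Longrightarrow> (Fl has_real_derivative dFl t) (at t within {-1..1})"
    and Fb_deriv: "\<And>t. t \<in> {-1..1} \<Longrightarrow> (Fb has_real_derivative dFb t) (at t within {-1..1})"
    and Ft_deriv: "\<And>t. t \<in> {-1..1} \<Longrightarrow> (Ft has_real_derivative dFt t) (at t within {-1..1})"
    and corner_A: "Fl (-1) = Fb (-1)"
    and corner_D: "Fl 1 = Ft (-1)"
    and compat_B: "lamB Dx = 0 \<Longrightarrow> dFb 1 = TBC x Dx unBC (-1)"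
    and compat_C: "lamC Dx = 0 \<Longrightarrow> dFt 1 = TBC x Dx unBC 1"
    and g_deriv: "\<And>p. p \<in> sq \<Longrightarrow> (g has_derivative Dg p) (at p within sq)"
  shows "(\<forall>\<eta>\<in>{-1..1}. Vfun x Dx unBC Fl Fb Ft (dFb 1) (dFt 1) g Dg (-1) \<eta> = Fl \<eta>)
       \<and> (\<forall>\<xi>\<in>{-1..1}. Vfun x Dx unBC Fl Fb Ft (dFb 1) (dFt 1) g Dg \<xi> (-1) = Fb \<xi>)
       \<and> (\<forall>\<xi>\<in>{-1..1}. Vfun x Dx unBC Fl Fb Ft (dFb 1) (dFt 1) g Dg \<xi> 1 = Ft \<xi>)
       \<and> (\<forall>\<eta>\<in>{-1..1}. \<exists>Vxi Veta.
            ((\<lambda>\<xi>. Vfun x Dx unBC Fl Fb Ft (dFb 1) (dFt 1) g Dg \<xi> \<eta>) has_real_derivative Vxi)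
               (at 1 within {-1..1})
          \<and> ((\<lambda>\<eta>'. Vfun x Dx unBC Fl Fb Ft (dFb 1) (dFt 1) g Dg 1 \<eta>') has_real_derivative Veta)
               (at \<eta> within {-1..1})
          \<and> Vxi + SBC Dx \<eta> * Veta = TBC x Dx unBC \<eta>)"
proof -
  define lB lC where "lB = lamB Dx" and "lC = lamC Dx"
  define a c where "a = FaB x Dx unBC (dFb 1)" and "c = FaC x Dx unBC (dFt 1)"
  define T S where "T = TBC x Dx unBC" and "S = SBC Dx"
  define Fg where "Fg = Fgxi T S g Dg Fb Ft lB lC a c"
  have V: "Vfun x Dx unBC Fl Fb Ft (dFb 1) (dFt 1) g Dg \<xi> \<eta>
             = g (\<xi>, \<eta>) - Pg g Dg lB lC \<xi> \<eta> + PFg Fl Fb Ft (dFb 1) (dFt 1) Fg lB lC a c \<xi> \<eta>"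
    for \<xi> \<eta>
    by (simp add: Vfun_def Let_def lB_def lC_def a_def c_def T_def S_def Fg_def)
  have Fg_bottom: "Fg (-1) = dFb 1"
    unfolding Fg_def Fgxi_bottom_corner T_def S_def lB_def a_def FaB_def
    by (rule corner_flux_eq[OF J_nonsing lamB_def compat_B]) simp
  have Fg_top: "Fg 1 = dFt 1"
    unfolding Fg_def Fgxi_top_corner T_def S_def lC_def c_def FaC_def
    by (rule corner_flux_eq[OF J_nonsing lamC_def compat_C]) simp
  have dFb1: "(Fb has_real_derivative dFb 1) (at 1 within {-1..1})"
    and dFt1: "(Ft has_real_derivative dFt 1) (at 1 within {-1..1})"
    using Fb_deriv Ft_deriv by auto
  show ?thesis
  proof (intro conjI ballI)
    fix \<eta> :: real
    assume \<eta>: "\<eta> \<in> {-1..1}"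
    show "Vfun x Dx unBC Fl Fb Ft (dFb 1) (dFt 1) g Dg (-1) \<eta> = Fl \<eta>"
      using corner_A corner_D by (simp add: V Pg_left_edge PFg_left_edge)
    show "\<exists>Vxi Veta.
            ((\<lambda>\<xi>. Vfun x Dx unBC Fl Fb Ft (dFb 1) (dFt 1) g Dg \<xi> \<eta>) has_real_derivative Vxi)
               (at 1 within {-1..1})
          \<and> ((\<lambda>\<eta>'. Vfun x Dx unBC Fl Fb Ft (dFb 1) (dFt 1) g Dg 1 \<eta>') has_real_derivative Veta)
               (at \<eta> within {-1..1})
          \<and> Vxi + SBC Dx \<eta> * Veta = TBC x Dx unBC \<eta>"
      unfolding V
      using has_real_derivative_xi_right_edge[OF g_deriv dFb1 dFt1 \<eta>]
        has_real_derivative_eta_right_edge[OF g_deriv \<eta>]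
      by (fastforce simp: Fg_def Fgxi_def T_def S_def)
  next
    fix \<xi> :: real
    show "Vfun x Dx unBC Fl Fb Ft (dFb 1) (dFt 1) g Dg \<xi> (-1) = Fb \<xi>"
      using Fg_bottom by (simp add: V Pg_bottom_edge PFg_bottom_edge)
    show "Vfun x Dx unBC Fl Fb Ft (dFb 1) (dFt 1) g Dg \<xi> 1 = Ft \<xi>"
      using Fg_top by (simp add: V Pg_top_edge PFg_top_edge)
  qed
qed

end
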